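(* Let $n\ge 2$ and $m$ be integers with $(n-1)^2\le m< n(n-1)$. Among all simple directed graphs with $n$ vertices and $m$ arcs, the maximal algebraic connectivity is $n-1$, and such a graph $\mathbb G$ has algebraic connectivity $n-1$ if and only if its complement $\overline{\mathbb G}$ is a directed forest consisting of $m-n(n-2)$ directed trees.
   Context: A simple directed graph has no self-arcs and no repeated arcs; an arc $(j,i)$ goes from $j$ to $i$. The (in-degree) Laplacian of $\mathbb G$ on vertices $\{1,\dots,n\}$ is $L(\mathbb G)=D-A$, $D$ the diagonal matrix of in-degrees, $A_{ij}=1$ if $(j,i)$ is an arc and $0$ otherwise. The algebraic connectivity $a(\mathbb G)$ is the second smallest real part among the $n$ eigenvalues of $L(\mathbb G)$ counted with algebraic multiplicity (the smallest is always $0$). The complement $\overline{\mathbb G}$ is the simple directed graph on the same vertex set whose arcs are exactly the ordered pairs $(i,j)$, $i\ne j$, that are not arcs of $\mathbb G$. A vertex $r$ is a root if there is a directed path from $r$ to every other vertex; a directed tree on $k$ vertices is a directed graph with a root and $k-1$ arcs (a single vertex is a directed tree). A directed forest is a vertex-disjoint union of directed trees covering all vertices, with no arcs between different trees. *)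

theory Defs
  imports "Jordan_Normal_Form.Char_Poly" "HOL-Library.Multiset" "HOL-Library.Disjoint_Sets"
begin

text \<open>Directed graphs on the vertex set {0..<n}, given by their arc set;
  an arc (j,i) goes from j to i.\<close>

definition simple_digraph :: "nat \<Rightarrow> (nat \<times> nat) set \<Rightarrow> bool" where
  "simple_digraph n A \<longleftrightarrow> A \<subseteq> {0..<n} \<times> {0..<n} \<and> (\<forall>i. (i, i) \<notin> A)"

definition in_degree :: "(nat \<times> nat) set \<Rightarrow> nat \<Rightarrow> nat" where
  "in_degree A i = card {k. (k, i) \<in> A}"

definition laplacian :: "nat \<Rightarrow> (nat \<times> nat) set \<Rightarrow> complex mat" where
  "laplacian n A = mat n n (\<lambda>(i, j).
      if i = j then of_nat (in_degree A i)
      else if (j, i) \<in> A then -1 else 0)"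

text \<open>Eigenvalues with algebraic multiplicity = roots of the characteristic
  polynomial with multiplicity; the algebraic connectivity is the second
  smallest real part (index 1 of the sorted list of real parts).\<close>
definition alg_conn :: "nat \<Rightarrow> (nat \<times> nat) set \<Rightarrow> real" where
  "alg_conn n A =
     sorted_list_of_multiset (image_mset Re (proots (char_poly (laplacian n A)))) ! 1"

definition complement :: "nat \<Rightarrow> (nat \<times> nat) set \<Rightarrow> (nat \<times> nat) set" where
  "complement n A = {(i, j). i < n \<and> j < n \<and> i \<noteq> j \<and> (i, j) \<notin> A}"

definition directed_tree :: "nat set \<Rightarrow> (nat \<times> nat) set \<Rightarrow> bool" where
  "directed_tree S E \<longleftrightarrow> E \<subseteq> S \<times> S \<and>
     (\<exists>r\<in>S. \<forall>v\<in>S. (r, v) \<in> E\<^sup>*) \<and> card E = card S - 1"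

definition directed_forest :: "nat \<Rightarrow> (nat \<times> nat) set \<Rightarrow> nat \<Rightarrow> bool" where
  "directed_forest n E k \<longleftrightarrow>
     (\<exists>P. partition_on {0..<n} P \<and> card P = k \<and>
          (\<forall>(i, j)\<in>E. \<exists>S\<in>P. i \<in> S \<and> j \<in> S) \<and>
          (\<forall>S\<in>P. directed_tree S (E \<inter> S \<times> S)))"

end

theory Submission
  imports Defs "Jordan_Normal_Form.Schur_Decomposition"
begin

text \<open>Write H for the complement of G. Since L(G) + L(H) = n I - J and both Laplacians have zero row
  sums, splitting off the common eigenvalue 0 (eigenvector: the all-ones vector) leaves spectra
  that correspond under x \<mapsto> n - x. Hence a(G) = n - 1 exactly when all remaining eigenvalues of
  L(H) have real part at most 1 and the value 1 occurs.

  If H is acyclic, L(H) is triangular with respect to a topological order, so its eigenvalues are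
  the in-degrees of H. If H has a cycle, the vertices reaching it index a principal submatrix of
  L(H) with zero row sums and trace at least its size, which forces an eigenvalue of real part
  greater than 1. So a(G) = n - 1 iff H is a nonempty branching (acyclic, all in-degrees at most 1),
  and a(G) < n - 1 otherwise. A branching with h arcs is a directed forest of n - h trees; for
  (n - 1)^2 \<le> m < n (n - 1) the complement has h = n (n - 1) - m arcs with 1 \<le> h \<le> n - 1, and a star
  with h arcs attains the maximum.\<close>

section \<open>Characteristic polynomials of matrices with zero row sums\<close>

lemma proots_linear_factors: "proots (\<Prod>a\<leftarrow>as. [:- a, 1:]) = mset (as :: 'a::idom list)"
proof (induction as)
  case (Cons a as)
  have "(\<Prod>a\<leftarrow>as. [:- a, 1:]) \<noteq> (0 :: 'a poly)"
    by (auto simp: prod_list_zero_iff)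
  then show ?case
    using Cons proots_mult[of "[:- a, 1:]" "\<Prod>a\<leftarrow>as. [:- a, 1:]"] by simp
qed simp

lemma index_mult_mat_sum:
  "A \<in> carrier_mat m k \<Longrightarrow> B \<in> carrier_mat k n \<Longrightarrow> i < m \<Longrightarrow> j < n \<Longrightarrow>
    (A * B) $$ (i, j) = (\<Sum>l<k. A $$ (i, l) * B $$ (l, j))"
  by (simp add: scalar_prod_def atLeast0LessThan)

definition shear_mat :: "nat \<Rightarrow> 'a::comm_ring_1 mat" where
  "shear_mat n = mat n n (\<lambda>(i, j). if j = 0 \<or> i = j then 1 else 0)"

definition unshear_mat :: "nat \<Rightarrow> 'a::comm_ring_1 mat" where
  "unshear_mat n = mat n n (\<lambda>(i, j). if i = j then 1 else if j = 0 then -1 else 0)"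

lemma shear_mat_dims [simp]:
  "shear_mat n \<in> carrier_mat n n" "dim_row (shear_mat n) = n" "dim_col (shear_mat n) = n"
  "unshear_mat n \<in> carrier_mat n n" "dim_row (unshear_mat n) = n" "dim_col (unshear_mat n) = n"
  by (simp_all add: shear_mat_def unshear_mat_def)

lemma shear_mat_mult_unshear_mat: "shear_mat n * unshear_mat n = (1\<^sub>m n :: 'a::comm_ring_1 mat)"
proof (rule eq_matI)
  fix i j assume "i < dim_row (1\<^sub>m n :: 'a mat)" "j < dim_col (1\<^sub>m n :: 'a mat)"
  then have ij: "i < n" "j < n" by auto
  have "(shear_mat n * unshear_mat n :: 'a mat) $$ (i, j)
      = (\<Sum>l<n. shear_mat n $$ (i, l) * unshear_mat n $$ (l, j))"
    using ij by (intro index_mult_mat_sum) auto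
  also have "\<dots> = (\<Sum>l<n. (if l = j then (if j = 0 \<or> i = j then 1 else 0) else 0)
               - (if l = i then (if j = 0 \<and> i \<noteq> 0 then 1 else 0) else 0))"
    using ij by (intro sum.cong) (auto simp: shear_mat_def unshear_mat_def)
  also have "\<dots> = 1\<^sub>m n $$ (i, j)"
    using ij by (simp add: sum_subtractf)
  finally show "(shear_mat n * unshear_mat n :: 'a mat) $$ (i, j) = 1\<^sub>m n $$ (i, j)" .
qed auto

lemma unshear_mat_mult_shear_mat: "unshear_mat n * shear_mat n = (1\<^sub>m n :: 'a::comm_ring_1 mat)"
proof (rule eq_matI)
  fix i j assume "i < dim_row (1\<^sub>m n :: 'a mat)" "j < dim_col (1\<^sub>m n :: 'a mat)"
  then have ij: "i < n" "j < n" by auto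
  have "(unshear_mat n * shear_mat n :: 'a mat) $$ (i, j)
      = (\<Sum>l<n. unshear_mat n $$ (i, l) * shear_mat n $$ (l, j))"
    using ij by (intro index_mult_mat_sum) auto
  also have "\<dots> = (\<Sum>l<n. (if l = i then (if j = 0 \<or> i = j then 1 else 0) else 0)
               - (if l = 0 then (if i \<noteq> 0 \<and> j = 0 then 1 else 0) else 0))"
    using ij by (intro sum.cong) (auto simp: shear_mat_def unshear_mat_def)
  also have "\<dots> = 1\<^sub>m n $$ (i, j)"
    using ij by (simp add: sum_subtractf)
  finally show "(unshear_mat n * shear_mat n :: 'a mat) $$ (i, j) = 1\<^sub>m n $$ (i, j)" .
qed auto

lemma char_poly_nonzero: "A \<in> carrier_mat n n \<Longrightarrow> char_poly A \<noteq> 0"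
  using degree_monic_char_poly[of A n] by auto

lemma in_proots_char_poly_iff:
  "(A :: 'a::idom mat) \<in> carrier_mat n n \<Longrightarrow> x \<in># proots (char_poly A) \<longleftrightarrow> poly (char_poly A) x = 0"
  using set_count_proots[OF char_poly_nonzero] by blast

text \<open>When all row sums of a square matrix vanish, the all-ones vector is an eigenvector for 0;
  conjugating by the shear splits it off and leaves this matrix as the block that carries the
  remaining eigenvalues.\<close>

definition deflate_mat :: "'a::comm_ring_1 mat \<Rightarrow> 'a mat" where
  "deflate_mat A = mat (dim_row A - 1) (dim_row A - 1) (\<lambda>(i, j). A $$ (Suc i, Suc j) - A $$ (0, Suc j))"

lemma deflate_mat_carrier [simp]: "A \<in> carrier_mat (Suc k) (Suc k) \<Longrightarrow> deflate_mat A \<in> carrier_mat k k"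
  by (simp add: deflate_mat_def)

lemma index_mult_shear_mat:
  assumes A: "A \<in> carrier_mat n n"
    and row_sums: "\<And>i. i < n \<Longrightarrow> (\<Sum>j<n. A $$ (i, j)) = 0"
    and ij: "i < n" "j < n"
  shows "(A * shear_mat n) $$ (i, j) = (if j = 0 then 0 else A $$ (i, j))"
proof -
  have "(A * shear_mat n) $$ (i, j) = (\<Sum>l<n. A $$ (i, l) * shear_mat n $$ (l, j))"
    using A ij by (intro index_mult_mat_sum) auto
  also have "\<dots> = (\<Sum>l<n. if j = 0 then A $$ (i, l) else if l = j then A $$ (i, j) else 0)"
    using ij by (intro sum.cong) (auto simp: shear_mat_def)
  also have "\<dots> = (if j = 0 then 0 else A $$ (i, j))"
    using row_sums[OF ij(1)] ij(2) by simp
  finally show ?thesis .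
qed

lemma similar_mat_deflate_mat:
  fixes A :: "'a::comm_ring_1 mat"
  assumes A: "A \<in> carrier_mat (Suc k) (Suc k)"
    and row_sums: "\<And>i. i < Suc k \<Longrightarrow> (\<Sum>j<Suc k. A $$ (i, j)) = 0"
  shows "similar_mat A
    (four_block_mat (0\<^sub>m 1 1) (mat 1 k (\<lambda>(_, j). A $$ (0, Suc j))) (0\<^sub>m k 1) (deflate_mat A))"
    (is "similar_mat A ?B")
proof -
  let ?n = "Suc k"
  let ?P = "shear_mat ?n :: 'a mat" and ?Q = "unshear_mat ?n :: 'a mat"
  have B: "?B \<in> carrier_mat ?n ?n"
    using four_block_carrier_mat[of "0\<^sub>m 1 1" 1 1 "deflate_mat A" k k] A by simp
  have AP: "(A * ?P) $$ (i, j) = (if j = 0 then 0 else A $$ (i, j))" if "i < ?n" "j < ?n" for i j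
    by (rule index_mult_shear_mat) (use A row_sums that in auto)
  have "?Q * (A * ?P) = ?B"
  proof (rule eq_matI)
    fix i j assume "i < dim_row ?B" "j < dim_col ?B"
    then have ij: "i < ?n" "j < ?n"
      using B by auto
    have "(?Q * (A * ?P)) $$ (i, j) = (\<Sum>l<?n. ?Q $$ (i, l) * (A * ?P) $$ (l, j))"
      using A ij by (intro index_mult_mat_sum) auto
    also have "\<dots> = (\<Sum>l<?n. (if l = i then (A * ?P) $$ (i, j) else 0)
                      - (if l = 0 \<and> i \<noteq> 0 then (A * ?P) $$ (0, j) else 0))"
      using ij by (intro sum.cong) (auto simp: unshear_mat_def)
    also have "\<dots> = (if i = 0 then (A * ?P) $$ (0, j) else (A * ?P) $$ (i, j) - (A * ?P) $$ (0, j))"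
      using ij by (simp add: sum_subtractf)
    also have "\<dots> = ?B $$ (i, j)"
      using A ij unfolding AP[OF ij] AP[OF zero_less_Suc ij(2)]
      by (cases i; cases j) (auto simp: deflate_mat_def)
    finally show "(?Q * (A * ?P)) $$ (i, j) = ?B $$ (i, j)" .
  qed (use A B in auto)
  then have "?B = ?Q * A * ?P"
    using A by (simp add: assoc_mult_mat[of ?Q ?n ?n A ?n ?P ?n])
  then show ?thesis
    using A B by (intro similar_mat_sym[OF similar_matI[of ?B A ?Q ?P ?n]])
      (auto simp: shear_mat_mult_unshear_mat unshear_mat_mult_shear_mat)
qed

lemma char_poly_deflate_mat:
  fixes A :: "'a::comm_ring_1 mat"
  assumes A: "A \<in> carrier_mat (Suc k) (Suc k)"
    and row_sums: "\<And>i. i < Suc k \<Longrightarrow> (\<Sum>j<Suc k. A $$ (i, j)) = 0"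
  shows "char_poly A = [:0, 1:] * char_poly (deflate_mat A)"
proof -
  from similar_mat_deflate_mat[OF A row_sums]
  have "char_poly A
      = char_poly (four_block_mat (0\<^sub>m 1 1) (mat 1 k (\<lambda>(_, j). A $$ (0, Suc j)))
          (0\<^sub>m k 1) (deflate_mat A))"
    by (rule char_poly_similar)
  also have "\<dots> = char_poly (0\<^sub>m 1 1 :: 'a mat) * char_poly (deflate_mat A)"
    using A by (intro char_poly_four_block_zeros_col) auto
  also have "char_poly (0\<^sub>m 1 1 :: 'a mat) = [:0, 1:]"
    by (simp add: char_poly_defs det_def'[of _ 1])
  finally show ?thesis .
qed

lemma proots_char_poly_deflate_mat:
  fixes A :: "'a::idom mat"
  assumes "A \<in> carrier_mat (Suc k) (Suc k)"
    and "\<And>i. i < Suc k \<Longrightarrow> (\<Sum>j<Suc k. A $$ (i, j)) = 0"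
  shows "proots (char_poly A) = add_mset 0 (proots (char_poly (deflate_mat A)))"
proof -
  have "char_poly (deflate_mat A) \<noteq> 0"
    using assms(1) by (intro char_poly_nonzero[of _ k]) auto
  then have "proots ([:0, 1:] * char_poly (deflate_mat A)) = proots [:0, 1:] + proots (char_poly (deflate_mat A))"
    by (intro proots_mult) auto
  then show ?thesis
    using char_poly_deflate_mat[OF assms] by simp
qed

section \<open>Eigenvalues of complex matrices\<close>

lemma upper_triangular_similar_proots:
  fixes A :: "complex mat"
  assumes A: "A \<in> carrier_mat k k"
  obtains T where "T \<in> carrier_mat k k" "upper_triangular T" "similar_mat A T"
    "proots (char_poly A) = mset (diag_mat T)"
proof -
  obtain es where es: "char_poly A = (\<Prod>a\<leftarrow>es. [:- a, 1:])"
    using char_poly_factorized[OF A] by blast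
  define T where "T = schur_upper_triangular A es"
  have T: "T \<in> carrier_mat k k" "upper_triangular T" "similar_mat A T"
    using schur_upper_triangular[OF A es] unfolding T_def by auto
  have "char_poly A = (\<Prod>a\<leftarrow>diag_mat T. [:- a, 1:])"
    using char_poly_similar[OF T(3)] char_poly_upper_triangular[OF T(1,2)] by simp
  then show thesis
    using that[OF T] by (simp add: proots_linear_factors)
qed

lemma size_proots_char_poly:
  fixes A :: "complex mat"
  assumes "A \<in> carrier_mat k k"
  shows "size (proots (char_poly A)) = k"
  using char_poly_factorized[OF assms] by (auto simp: proots_linear_factors)

lemma proots_char_poly_scalar_minus:
  fixes A :: "complex mat"
  assumes A: "A \<in> carrier_mat k k"
  shows "proots (char_poly (c \<cdot>\<^sub>m 1\<^sub>m k - A)) = image_mset (\<lambda>x. c - x) (proots (char_poly A))"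
proof -
  obtain T where T: "T \<in> carrier_mat k k" "upper_triangular T" "similar_mat A T"
    and roots: "proots (char_poly A) = mset (diag_mat T)"
    using upper_triangular_similar_proots[OF A] by blast
  obtain n P Q where wit: "{A, T, P, Q} \<subseteq> carrier_mat n n" "P * Q = 1\<^sub>m n" "Q * P = 1\<^sub>m n"
    "A = P * T * Q"
    using similar_matD[OF T(3)] by blast
  with A have P: "P \<in> carrier_mat k k" and Q: "Q \<in> carrier_mat k k"
    and PQ: "P * Q = 1\<^sub>m k" "Q * P = 1\<^sub>m k"
    by auto
  let ?cI = "c \<cdot>\<^sub>m 1\<^sub>m k"
  have "P * (?cI - T) * Q = (P * ?cI - P * T) * Q"
    using P T(1) by (subst mult_minus_distrib_mat) auto
  also have "\<dots> = P * ?cI * Q - P * T * Q"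
    using P Q T(1) by (intro minus_mult_distrib_mat[of _ k k]) auto
  also have "P * ?cI * Q = c \<cdot>\<^sub>m (P * Q)"
    using P Q mult_smult_distrib[of P k k "1\<^sub>m k" k c] mult_smult_assoc_mat[of P k k Q k c] by simp
  finally have "?cI - A = P * (?cI - T) * Q"
    using wit(4) PQ by simp
  then have "similar_mat (?cI - A) (?cI - T)"
    using P Q PQ wit(1) T(1) by (intro similar_matI[of _ _ P Q k]) auto
  then have "char_poly (?cI - A) = char_poly (?cI - T)"
    by (rule char_poly_similar)
  also have "\<dots> = (\<Prod>a\<leftarrow>diag_mat (?cI - T). [:- a, 1:])"
    using T(1,2) by (intro char_poly_upper_triangular[of _ k]) (auto simp: upper_triangular_def)
  also have "diag_mat (?cI - T) = map (\<lambda>x. c - x) (diag_mat T)"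
    using T(1) by (auto simp: diag_mat_def)
  finally have "proots (char_poly (?cI - A)) = mset (map (\<lambda>x. c - x) (diag_mat T))"
    by (simp only: proots_linear_factors)
  then show ?thesis
    by (simp add: roots)
qed

definition mat_trace :: "'a::comm_ring_1 mat \<Rightarrow> 'a" where
  "mat_trace A = (\<Sum>i<dim_row A. A $$ (i, i))"

lemma mat_trace_mult_commute:
  assumes "A \<in> carrier_mat m k" "B \<in> carrier_mat k m"
  shows "mat_trace (A * B) = mat_trace (B * A)"
proof -
  have "mat_trace (A * B) = (\<Sum>i<m. \<Sum>l<k. A $$ (i, l) * B $$ (l, i))"
    using assms by (simp add: mat_trace_def scalar_prod_def atLeast0LessThan)
  also have "\<dots> = (\<Sum>l<k. \<Sum>i<m. B $$ (l, i) * A $$ (i, l))"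
    by (subst sum.swap) (simp add: mult.commute)
  also have "\<dots> = mat_trace (B * A)"
    using assms by (simp add: mat_trace_def scalar_prod_def atLeast0LessThan)
  finally show ?thesis .
qed

lemma mat_trace_similar:
  assumes "similar_mat A B"
  shows "mat_trace A = mat_trace B"
proof -
  obtain n P Q where PQ: "{A, B, P, Q} \<subseteq> carrier_mat n n" "Q * P = 1\<^sub>m n" "A = P * B * Q"
    using similar_matD[OF assms] by blast
  then have "mat_trace A = mat_trace (P * (B * Q))"
    by (simp add: assoc_mult_mat[of P n n B n Q n])
  also have "\<dots> = mat_trace (B * Q * P)"
    using PQ(1) by (intro mat_trace_mult_commute[of P n n]) auto
  also have "\<dots> = mat_trace B"
    using PQ by (auto simp: assoc_mult_mat[of B n n Q n P n])
  finally show ?thesis .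
qed

lemma sum_proots_char_poly:
  fixes A :: "complex mat"
  assumes A: "A \<in> carrier_mat k k"
  shows "sum_mset (proots (char_poly A)) = mat_trace A"
proof -
  obtain T where T: "T \<in> carrier_mat k k" "similar_mat A T"
    and roots: "proots (char_poly A) = mset (diag_mat T)"
    using upper_triangular_similar_proots[OF A] by blast
  have "sum_mset (mset (diag_mat T)) = mat_trace T"
    using T(1) unfolding sum_mset_sum_list diag_mat_def
    by (simp add: mat_trace_def interv_sum_list_conv_sum_set_nat atLeast0LessThan)
  then show ?thesis
    using roots mat_trace_similar[OF T(2)] by simp
qed

lemma ex_Re_gt_if_sum_mset_gt:
  fixes X :: "complex multiset"
  assumes "real (size X) * c < Re (sum_mset X)"
  shows "\<exists>x\<in>#X. c < Re x"
proof (rule ccontr)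
  assume "\<not> ?thesis"
  then have "Re (sum_mset X) \<le> real (size X) * c"
    by (induction X) (auto simp: algebra_simps)
  with assms show False
    by simp
qed

lemma zero_row_sums_root_Re_gt:
  fixes A :: "complex mat"
  assumes A: "A \<in> carrier_mat (Suc k) (Suc k)"
    and row_sums: "\<And>i. i < Suc k \<Longrightarrow> (\<Sum>j<Suc k. A $$ (i, j)) = 0"
    and trace: "real k * c < Re (mat_trace A)"
  shows "\<exists>e. poly (char_poly A) e = 0 \<and> c < Re e"
proof -
  define X where "X = proots (char_poly (deflate_mat A))"
  have roots: "proots (char_poly A) = add_mset 0 X"
    unfolding X_def using A row_sums by (rule proots_char_poly_deflate_mat)
  have "size X = k"
    using size_proots_char_poly[OF A] roots by simp
  moreover have "sum_mset X = mat_trace A"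
    using sum_proots_char_poly[OF A] roots by simp
  ultimately obtain e where "e \<in># X" "c < Re e"
    using ex_Re_gt_if_sum_mset_gt[of X c] trace by auto
  then show ?thesis
    using roots in_proots_char_poly_iff[OF A] by auto
qed

section \<open>Principal submatrices and rank-triangular matrices\<close>

definition principal_submatrix :: "'a mat \<Rightarrow> (nat \<Rightarrow> nat) \<Rightarrow> nat \<Rightarrow> 'a mat" where
  "principal_submatrix A f s = mat s s (\<lambda>(a, b). A $$ (f a, f b))"

lemma eigenvalue_principal_submatrix:
  fixes A :: "'a::comm_ring_1 mat"
  assumes A: "A \<in> carrier_mat n n" and f: "bij_betw f {..<s} S" and S: "S \<subseteq> {..<n}"
    and invariant: "\<And>i b. i < n \<Longrightarrow> i \<notin> S \<Longrightarrow> b < s \<Longrightarrow> A $$ (i, f b) = 0"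
    and ev: "eigenvalue (principal_submatrix A f s) e"
  shows "eigenvalue A e"
proof -
  obtain w where w: "w \<in> carrier_vec s" "w \<noteq> 0\<^sub>v s" "principal_submatrix A f s *\<^sub>v w = e \<cdot>\<^sub>v w"
    using ev by (auto simp: eigenvalue_def eigenvector_def principal_submatrix_def)
  define g where "g = the_inv_into {..<s} f"
  have fS: "f b \<in> S" and fn: "f b < n" and gf: "g (f b) = b" if "b < s" for b
    using that f S by (auto simp: g_def bij_betw_def the_inv_into_f_f)
  define v where "v = vec n (\<lambda>i. if i \<in> S then w $ g i else 0)"
  have v: "v \<in> carrier_vec n"
    by (simp add: v_def)
  have v_f: "v $ f b = w $ b" if "b < s" for b
    using that fS fn gf by (simp add: v_def)
  have Av: "(A *\<^sub>v v) $ i = (\<Sum>b<s. A $$ (i, f b) * w $ b)" if i: "i < n" for i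
  proof -
    have "(A *\<^sub>v v) $ i = (\<Sum>j<n. A $$ (i, j) * v $ j)"
      using A i v by (simp add: scalar_prod_def atLeast0LessThan)
    also have "\<dots> = (\<Sum>j\<in>S. A $$ (i, j) * w $ g j)"
      using S by (intro sum.mono_neutral_cong_right) (auto simp: v_def)
    also have "\<dots> = (\<Sum>b<s. A $$ (i, f b) * w $ b)"
      by (subst sum.reindex_bij_betw[OF f, symmetric]) (simp add: gf)
    finally show ?thesis .
  qed
  have "A *\<^sub>v v = e \<cdot>\<^sub>v v"
  proof (rule eq_vecI)
    fix i assume "i < dim_vec (e \<cdot>\<^sub>v v)"
    then have i: "i < n"
      using v by simp
    show "(A *\<^sub>v v) $ i = (e \<cdot>\<^sub>v v) $ i"
    proof (cases "i \<in> S")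
      case True
      then obtain a where a: "a < s" "i = f a"
        using f by (auto simp: bij_betw_def)
      have "(\<Sum>b<s. A $$ (i, f b) * w $ b) = (principal_submatrix A f s *\<^sub>v w) $ a"
        using a w(1) by (simp add: principal_submatrix_def scalar_prod_def atLeast0LessThan)
      then show ?thesis
        using Av[OF i] w(3) a i v v_f w(1) by simp
    next
      case False
      then show ?thesis
        using Av[OF i] invariant[OF i] i v by (simp add: v_def)
    qed
  qed (use A v in simp)
  moreover have "v \<noteq> 0\<^sub>v n"
  proof
    assume "v = 0\<^sub>v n"
    then have "w $ b = 0" if "b < s" for b
      using v_f[OF that] fS[OF that] S that by auto
    then show False
      using w(1,2) by auto
  qed
  ultimately show ?thesis
    using A v by (auto simp: eigenvalue_def eigenvector_def)
qed

lemma poly_char_poly_principal_submatrix: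
  fixes A :: "'a::field mat"
  assumes A: "A \<in> carrier_mat n n" and f: "bij_betw f {..<s} S" and S: "S \<subseteq> {..<n}"
    and closed: "\<And>a j. a < s \<Longrightarrow> j < n \<Longrightarrow> j \<notin> S \<Longrightarrow> A $$ (f a, j) = 0"
    and root: "poly (char_poly (principal_submatrix A f s)) e = 0"
  shows "poly (char_poly A) e = 0"
proof -
  have fn: "f a < n" if "a < s" for a
    using that f S by (auto simp: bij_betw_def)
  let ?B = "principal_submatrix A f s"
  have B: "?B \<in> carrier_mat s s"
    by (simp add: principal_submatrix_def)
  have "poly (char_poly (transpose_mat ?B)) e = 0"
    using root char_poly_transpose_mat[OF B] by simp
  then have "eigenvalue (transpose_mat ?B) e"
    using B by (simp add: eigenvalue_root_char_poly[of _ s])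
  moreover have "transpose_mat ?B = principal_submatrix (transpose_mat A) f s"
    using A fn by (auto simp: principal_submatrix_def)
  ultimately have ev: "eigenvalue (principal_submatrix (transpose_mat A) f s) e"
    by simp
  have "transpose_mat A $$ (i, f b) = 0" if "i < n" "i \<notin> S" "b < s" for i b
    using closed[OF that(3,1,2)] A fn[OF that(3)] that(1) by simp
  then have "eigenvalue (transpose_mat A) e"
    using A by (intro eigenvalue_principal_submatrix[OF _ f S _ ev]) auto
  then show ?thesis
    using A by (simp add: eigenvalue_root_char_poly[of _ n])
qed

lemma sum_row_principal_submatrix:
  assumes f: "bij_betw f {..<s} S" and S: "S \<subseteq> {..<n}"
    and closed: "\<And>a j. a < s \<Longrightarrow> j < n \<Longrightarrow> j \<notin> S \<Longrightarrow> A $$ (f a, j) = 0" and a: "a < s"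
  shows "(\<Sum>b<s. principal_submatrix A f s $$ (a, b)) = (\<Sum>j<n. A $$ (f a, j))"
proof -
  have "(\<Sum>b<s. principal_submatrix A f s $$ (a, b)) = (\<Sum>b<s. A $$ (f a, f b))"
    using a by (intro sum.cong) (auto simp: principal_submatrix_def)
  also have "\<dots> = (\<Sum>j\<in>S. A $$ (f a, j))"
    by (rule sum.reindex_bij_betw[OF f])
  also have "\<dots> = (\<Sum>j<n. A $$ (f a, j))"
    using S closed[OF a] by (intro sum.mono_neutral_left) auto
  finally show ?thesis .
qed

lemma mat_trace_principal_submatrix:
  assumes "bij_betw f {..<s} S"
  shows "mat_trace (principal_submatrix A f s) = (\<Sum>j\<in>S. A $$ (j, j))"
proof -
  have "mat_trace (principal_submatrix A f s) = (\<Sum>a<s. A $$ (f a, f a))"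
    unfolding mat_trace_def by (intro sum.cong) (auto simp: principal_submatrix_def)
  also have "\<dots> = (\<Sum>j\<in>S. A $$ (j, j))"
    by (rule sum.reindex_bij_betw[OF assms])
  finally show ?thesis .
qed

lemma permutes_id_if_rank_decreasing:
  fixes \<rho> :: "nat \<Rightarrow> 'b::ordered_cancel_comm_monoid_add"
  assumes p: "p permutes {0..<n}" and decreasing: "\<And>i. i < n \<Longrightarrow> p i \<noteq> i \<Longrightarrow> \<rho> (p i) < \<rho> i"
  shows "p = id"
proof (rule ccontr)
  assume "p \<noteq> id"
  then obtain i where "p i \<noteq> i"
    by (auto simp: fun_eq_iff)
  moreover from this have "i < n"
    using p permutes_not_in by fastforce
  moreover have "\<rho> (p j) \<le> \<rho> j" if "j < n" for j
    using decreasing[OF that] by (cases "p j = j") auto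
  ultimately have "(\<Sum>j\<in>{0..<n}. \<rho> (p j)) < (\<Sum>j\<in>{0..<n}. \<rho> j)"
    using decreasing by (intro sum_strict_mono_ex1) (auto intro!: bexI[of _ i])
  moreover have "(\<Sum>j\<in>{0..<n}. \<rho> (p j)) = (\<Sum>j\<in>{0..<n}. \<rho> j)"
    using permutes_imp_bij[OF p] by (rule sum.reindex_bij_betw)
  ultimately show False
    by simp
qed

lemma det_rank_triangular:
  fixes A :: "'a::comm_ring_1 mat" and \<rho> :: "nat \<Rightarrow> 'b::ordered_cancel_comm_monoid_add"
  assumes A: "A \<in> carrier_mat n n"
    and rank: "\<And>i j. i < n \<Longrightarrow> j < n \<Longrightarrow> i \<noteq> j \<Longrightarrow> A $$ (i, j) \<noteq> 0 \<Longrightarrow> \<rho> j < \<rho> i"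
  shows "det A = prod_list (diag_mat A)"
proof -
  let ?perms = "{p. p permutes {0..<n}}"
  let ?term = "\<lambda>p. signof p * (\<Prod>i = 0..<n. A $$ (i, p i))"
  have vanish: "?term p = 0" if p: "p permutes {0..<n}" "p \<noteq> id" for p
  proof -
    obtain i where i: "i < n" "A $$ (i, p i) = 0"
      using permutes_id_if_rank_decreasing[OF p(1), of \<rho>] rank permutes_in_image[OF p(1)] p(2)
      by fastforce
    then have "(\<Prod>i = 0..<n. A $$ (i, p i)) = 0"
      by (intro prod_zero) auto
    then show ?thesis
      by simp
  qed
  have "det A = ?term id + (\<Sum>p\<in>?perms - {id}. ?term p)"
    unfolding det_def'[OF A] by (intro sum.remove) (auto simp: permutes_id finite_permutations)
  also have "(\<Sum>p\<in>?perms - {id}. ?term p) = 0"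
    using vanish by (intro sum.neutral) auto
  finally show ?thesis
    using A by (simp add: prod_list_diag_prod)
qed

lemma proots_char_poly_rank_triangular:
  fixes A :: "'a::idom mat" and \<rho> :: "nat \<Rightarrow> 'b::ordered_cancel_comm_monoid_add"
  assumes A: "A \<in> carrier_mat n n"
    and rank: "\<And>i j. i < n \<Longrightarrow> j < n \<Longrightarrow> i \<noteq> j \<Longrightarrow> A $$ (i, j) \<noteq> 0 \<Longrightarrow> \<rho> j < \<rho> i"
  shows "proots (char_poly A) = mset (diag_mat A)"
proof -
  have "char_poly A = prod_list (diag_mat (char_poly_matrix A))"
    unfolding char_poly_def using A rank
    by (intro det_rank_triangular[of _ n \<rho>]) (auto simp: char_poly_matrix_def)
  also have "diag_mat (char_poly_matrix A) = map (\<lambda>a. [:- a, 1:]) (diag_mat A)"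
    using A by (auto simp: diag_mat_def char_poly_matrix_def)
  finally show ?thesis
    by (simp only: proots_linear_factors)
qed

section \<open>Digraphs, complements and Laplacians\<close>

lemma simple_digraph_finite: "simple_digraph n A \<Longrightarrow> finite A"
  unfolding simple_digraph_def by (meson finite_SigmaI finite_atLeastLessThan finite_subset)

lemma simple_digraph_complement: "simple_digraph n (complement n A)"
  unfolding simple_digraph_def complement_def by auto

lemma complement_complement: "simple_digraph n A \<Longrightarrow> complement n (complement n A) = A"
  unfolding simple_digraph_def complement_def by auto

lemma card_complement:
  assumes "simple_digraph n A"
  shows "card (complement n A) = n * (n - 1) - card A"
proof -
  let ?K = "{0..<n} \<times> {0..<n} - (\<lambda>i. (i, i)) ` {0..<n}"
  have "card ?K = n * (n - 1)"
    by (subst card_Diff_subset) (auto simp: card_image inj_on_def diff_mult_distrib2)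
  moreover have "complement n A = ?K - A" and "A \<subseteq> ?K"
    using assms unfolding complement_def simple_digraph_def by auto
  ultimately show ?thesis
    using card_Diff_subset[OF simple_digraph_finite[OF assms]] by simp
qed

lemma finite_in_arcs: "finite A \<Longrightarrow> finite {u. (u, v) \<in> A}"
  by (erule finite_surj[of _ _ fst]) force

lemma in_degree_pos_iff: "finite A \<Longrightarrow> 0 < in_degree A v \<longleftrightarrow> (\<exists>u. (u, v) \<in> A)"
  unfolding in_degree_def by (auto simp: card_gt_0_iff finite_in_arcs)

lemma in_degree_le_1_unique:
  "finite A \<Longrightarrow> in_degree A v \<le> 1 \<Longrightarrow> (u, v) \<in> A \<Longrightarrow> (w, v) \<in> A \<Longrightarrow> u = w"
  unfolding in_degree_def using card_le_Suc0_iff_eq[OF finite_in_arcs[of A v]] by auto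

lemma card_arcs_into_eq_sum_in_degree:
  assumes "finite A" "finite X"
  shows "card {a \<in> A. snd a \<in> X} = (\<Sum>v\<in>X. in_degree A v)"
proof -
  have "{a \<in> A. snd a \<in> X} = (\<Union>v\<in>X. (\<lambda>u. (u, v)) ` {u. (u, v) \<in> A})"
    by force
  also have "card \<dots> = (\<Sum>v\<in>X. card ((\<lambda>u. (u, v)) ` {u. (u, v) \<in> A}))"
    using assms by (intro card_UN_disjoint) (auto simp: finite_in_arcs)
  also have "\<dots> = (\<Sum>v\<in>X. in_degree A v)"
    by (simp add: card_image inj_on_def in_degree_def)
  finally show ?thesis .
qed

lemma card_eq_sum_in_degree:
  assumes "simple_digraph n A"
  shows "card A = (\<Sum>v<n. in_degree A v)"
proof -
  have "{a \<in> A. snd a \<in> {..<n}} = A"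
    using assms unfolding simple_digraph_def by auto
  then show ?thesis
    using card_arcs_into_eq_sum_in_degree[OF simple_digraph_finite[OF assms], of "{..<n}"] by simp
qed

lemma in_degree_complement:
  assumes A: "simple_digraph n A" and i: "i < n"
  shows "in_degree A i + in_degree (complement n A) i = n - 1"
proof -
  have "{u. (u, i) \<in> A} \<union> {u. (u, i) \<in> complement n A} = {0..<n} - {i}"
    and "{u. (u, i) \<in> A} \<inter> {u. (u, i) \<in> complement n A} = {}"
    using A i unfolding simple_digraph_def complement_def by auto
  moreover have "finite {u. (u, i) \<in> A}" "finite {u. (u, i) \<in> complement n A}"
    using A simple_digraph_complement by (auto intro: finite_in_arcs simple_digraph_finite)
  ultimately show ?thesis
    using i unfolding in_degree_def by (metis card_Un_disjoint card_Diff_singleton atLeastLessThan_iff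
        card_atLeastLessThan diff_zero zero_le)
qed

lemma laplacian_dims [simp]:
  "laplacian n A \<in> carrier_mat n n" "dim_row (laplacian n A) = n" "dim_col (laplacian n A) = n"
  by (simp_all add: laplacian_def)

lemma index_laplacian:
  "i < n \<Longrightarrow> j < n \<Longrightarrow> laplacian n A $$ (i, j) =
    (if i = j then of_nat (in_degree A i) else if (j, i) \<in> A then -1 else 0)"
  by (simp add: laplacian_def)

lemma laplacian_row_sum:
  assumes A: "simple_digraph n A" and i: "i < n"
  shows "(\<Sum>j<n. laplacian n A $$ (i, j)) = 0"
proof -
  have "(\<Sum>j<n. laplacian n A $$ (i, j))
      = laplacian n A $$ (i, i) + (\<Sum>j\<in>{..<n} - {i}. laplacian n A $$ (i, j))"
    using i by (intro sum.remove) auto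
  also have "(\<Sum>j\<in>{..<n} - {i}. laplacian n A $$ (i, j)) = (\<Sum>j\<in>{u. (u, i) \<in> A}. -1)"
  proof (rule sum.mono_neutral_cong_right)
    show in_arcs: "{u. (u, i) \<in> A} \<subseteq> {..<n} - {i}"
      using A unfolding simple_digraph_def by auto
    show "laplacian n A $$ (i, u) = -1" if u: "u \<in> {u. (u, i) \<in> A}" for u
    proof -
      have "u < n" "u \<noteq> i"
        using u in_arcs by auto
      then show ?thesis
        using u i by (simp add: index_laplacian)
    qed
  qed (use i in \<open>auto simp: index_laplacian\<close>)
  finally show ?thesis
    using i by (simp add: index_laplacian in_degree_def)
qed

lemma index_laplacian_complement:
  assumes A: "simple_digraph n A" and i: "i < n" and j: "j < n"
  shows "laplacian n A $$ (i, j) = (if i = j then of_nat n else 0) - 1 - laplacian n (complement n A) $$ (i, j)"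
proof (cases "i = j")
  case True
  have "complex_of_nat (in_degree A i + in_degree (complement n A) i) = of_nat n - 1"
    using in_degree_complement[OF A i] i by (simp add: of_nat_diff)
  then show ?thesis
    using True i by (simp add: index_laplacian algebra_simps)
next
  case False
  then show ?thesis
    using A i j by (auto simp: index_laplacian complement_def simple_digraph_def)
qed

lemma proots_laplacian_complement:
  assumes A: "simple_digraph n A" and n: "0 < n"
  obtains Q where "proots (char_poly (laplacian n (complement n A))) = add_mset 0 Q"
    and "proots (char_poly (laplacian n A)) = add_mset 0 (image_mset (\<lambda>x. of_nat n - x) Q)"
proof -
  obtain k where k: "n = Suc k"
    using n by (cases n) auto
  with A have A': "simple_digraph (Suc k) A"
    by simp
  let ?L = "laplacian n A" and ?M = "laplacian n (complement n A)"
  have L: "?L \<in> carrier_mat (Suc k) (Suc k)" and M: "?M \<in> carrier_mat (Suc k) (Suc k)"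
    using k by auto
  have "deflate_mat ?L = of_nat n \<cdot>\<^sub>m 1\<^sub>m k - deflate_mat ?M"
    using k by (intro eq_matI) (auto simp: deflate_mat_def index_laplacian_complement[OF A'])
  moreover have rows: "\<And>i. i < Suc k \<Longrightarrow> (\<Sum>j<Suc k. ?L $$ (i, j)) = 0"
    "\<And>i. i < Suc k \<Longrightarrow> (\<Sum>j<Suc k. ?M $$ (i, j)) = 0"
    unfolding k[symmetric] using laplacian_row_sum[OF A] laplacian_row_sum[OF simple_digraph_complement]
    by blast+
  ultimately have "proots (char_poly ?L)
      = add_mset 0 (image_mset (\<lambda>x. of_nat n - x) (proots (char_poly (deflate_mat ?M))))"
    using proots_char_poly_deflate_mat[OF L rows(1)] proots_char_poly_scalar_minus[of "deflate_mat ?M" k] M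
    by simp
  moreover have "proots (char_poly ?M) = add_mset 0 (proots (char_poly (deflate_mat ?M)))"
    using proots_char_poly_deflate_mat[OF M rows(2)] .
  ultimately show thesis
    using that by blast
qed

lemma card_ancestors_less:
  assumes "finite H" "acyclic H" "(u, v) \<in> H"
  shows "card {w. (w, u) \<in> H\<^sup>+} < card {w. (w, v) \<in> H\<^sup>+}"
proof (rule psubset_card_mono)
  have "{w. (w, v) \<in> H\<^sup>+} \<subseteq> fst ` H"
    by (force dest: tranclD)
  then show "finite {w. (w, v) \<in> H\<^sup>+}"
    using assms(1) finite_subset by blast
  have "u \<notin> {w. (w, u) \<in> H\<^sup>+}"
    using assms(2) unfolding acyclic_def by auto
  then show "{w. (w, u) \<in> H\<^sup>+} \<subset> {w. (w, v) \<in> H\<^sup>+}"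
    using assms(3) by (auto intro: trancl_into_trancl)
qed

lemma proots_laplacian_acyclic:
  assumes H: "simple_digraph n H" and acyclic: "acyclic H"
  shows "proots (char_poly (laplacian n H)) = mset (map (\<lambda>v. of_nat (in_degree H v)) [0..<n])"
proof -
  have "proots (char_poly (laplacian n H)) = mset (diag_mat (laplacian n H))"
  proof (rule proots_char_poly_rank_triangular[of _ n "\<lambda>v. card {w. (w, v) \<in> H\<^sup>+}"])
    fix i j assume "i < n" "j < n" "i \<noteq> j" "laplacian n H $$ (i, j) \<noteq> 0"
    then have "(j, i) \<in> H"
      by (auto simp: index_laplacian split: if_splits)
    then show "card {w. (w, j) \<in> H\<^sup>+} < card {w. (w, i) \<in> H\<^sup>+}"
      using card_ancestors_less[OF simple_digraph_finite[OF H] acyclic] by blast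
  qed simp
  also have "diag_mat (laplacian n H) = map (\<lambda>v. of_nat (in_degree H v)) [0..<n]"
    unfolding diag_mat_def by (simp add: index_laplacian cong: map_cong)
  finally show ?thesis .
qed

lemma card_le_sum_in_degree:
  assumes fin: "finite H" "finite S" and out: "\<And>u. u \<in> S \<Longrightarrow> \<exists>w\<in>S. (u, w) \<in> H"
  shows "card S \<le> (\<Sum>u\<in>S. in_degree H u)"
proof -
  obtain g where g: "\<And>u. u \<in> S \<Longrightarrow> g u \<in> S \<and> (u, g u) \<in> H"
    using out by metis
  have "inj_on (\<lambda>u. (u, g u)) S"
    by (auto intro: inj_onI)
  then have "card S \<le> card {a \<in> H. snd a \<in> S}"
    using g fin by (intro card_inj_on_le) auto
  then show ?thesis
    using card_arcs_into_eq_sum_in_degree[OF fin] by simp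
qed

lemma laplacian_root_Re_gt_1_if_closed:
  assumes H: "simple_digraph n H" and S: "S \<subseteq> {..<n}" "S \<noteq> {}"
    and closed: "\<And>u v. (u, v) \<in> H \<Longrightarrow> v \<in> S \<Longrightarrow> u \<in> S"
    and out: "\<And>u. u \<in> S \<Longrightarrow> \<exists>w\<in>S. (u, w) \<in> H"
  shows "\<exists>e. poly (char_poly (laplacian n H)) e = 0 \<and> 1 < Re e"
proof -
  let ?L = "laplacian n H"
  have finS: "finite S"
    using S(1) finite_subset by blast
  obtain k where k: "card S = Suc k"
    using S(2) finS by (cases "card S") auto
  obtain f where f: "bij_betw f {..<Suc k} S"
    using ex_bij_betw_nat_finite[OF finS] k by (auto simp: atLeast0LessThan)
  have fS: "f a \<in> S" and fn: "f a < n" if "a < Suc k" for a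
    using that f S(1) by (auto simp: bij_betw_def)
  have rows_vanish: "?L $$ (f a, j) = 0" if "a < Suc k" "j < n" "j \<notin> S" for a j
    using that fS[OF that(1)] fn[OF that(1)] closed by (auto simp: index_laplacian)
  define B where "B = principal_submatrix ?L f (Suc k)"
  have B: "B \<in> carrier_mat (Suc k) (Suc k)"
    by (simp add: B_def principal_submatrix_def)
  have "(\<Sum>b<Suc k. B $$ (a, b)) = 0" if a: "a < Suc k" for a
  proof -
    have "(\<Sum>b<Suc k. B $$ (a, b)) = (\<Sum>j<n. ?L $$ (f a, j))"
      unfolding B_def by (rule sum_row_principal_submatrix[OF f S(1) rows_vanish a])
    also have "\<dots> = 0"
      using H fn[OF a] by (rule laplacian_row_sum)
    finally show ?thesis .
  qed
  moreover have "real k * 1 < Re (mat_trace B)"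
  proof -
    have "mat_trace B = (\<Sum>u\<in>S. of_nat (in_degree H u))"
      unfolding B_def mat_trace_principal_submatrix[OF f] using S(1)
      by (intro sum.cong) (auto simp: index_laplacian)
    then have "Re (mat_trace B) = real (\<Sum>u\<in>S. in_degree H u)"
      by simp
    then show ?thesis
      using k card_le_sum_in_degree[OF simple_digraph_finite[OF H] finS out] by (simp del: of_nat_sum)
  qed
  ultimately obtain e where "poly (char_poly B) e = 0" "1 < Re e"
    using zero_row_sums_root_Re_gt[OF B] by blast
  then show ?thesis
    using poly_char_poly_principal_submatrix[OF laplacian_dims(1) f S(1) rows_vanish] B_def by blast
qed

lemma laplacian_root_Re_gt_1_if_cycle:
  assumes H: "simple_digraph n H" and v: "(v, v) \<in> H\<^sup>+"
  shows "\<exists>e. poly (char_poly (laplacian n H)) e = 0 \<and> 1 < Re e"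
proof (rule laplacian_root_Re_gt_1_if_closed[OF H])
  let ?S = "{u. (u, v) \<in> H\<^sup>+}"
  show "\<exists>w\<in>?S. (u, w) \<in> H" if u: "u \<in> ?S" for u
  proof -
    obtain w where w: "(u, w) \<in> H" "(w, v) \<in> H\<^sup>*"
      using u tranclD[of u v H] by auto
    have "w \<in> ?S"
    proof (cases "w = v")
      case False
      then show ?thesis
        using w(2) by (simp add: rtrancl_eq_or_trancl)
    qed (use v in simp)
    with w(1) show ?thesis
      by blast
  qed
  show "?S \<subseteq> {..<n}"
    using H unfolding simple_digraph_def by (fastforce dest: tranclD)
  show "?S \<noteq> {}"
    using v by auto
  show "u \<in> ?S" if "(u, w) \<in> H" "w \<in> ?S" for u w
    using that by (blast intro: trancl_into_trancl2)
qed

section \<open>Branchings and directed forests\<close>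

definition branching :: "(nat \<times> nat) set \<Rightarrow> bool" where
  "branching H \<longleftrightarrow> acyclic H \<and> (\<forall>v. in_degree H v \<le> 1)"

lemma in_degree_0_rtrancl_eq: "finite H \<Longrightarrow> in_degree H v = 0 \<Longrightarrow> (u, v) \<in> H\<^sup>* \<Longrightarrow> u = v"
  by (erule rtranclE) (use in_degree_pos_iff[of H v] in auto)

lemma in_degree_le_1_ancestors_linear:
  assumes fin: "finite H" and deg: "\<And>v. in_degree H v \<le> 1"
    and "(a, v) \<in> H\<^sup>*" "(b, v) \<in> H\<^sup>*"
  shows "(a, b) \<in> H\<^sup>* \<or> (b, a) \<in> H\<^sup>*"
  using assms(3,4)
proof (induction arbitrary: b rule: rtrancl_induct)
  case (step y z)
  show ?case
  proof (cases "b = z")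
    case True
    then show ?thesis
      using step.hyps by (meson rtrancl.rtrancl_into_rtrancl)
  next
    case False
    then obtain y' where "(b, y') \<in> H\<^sup>*" "(y', z) \<in> H"
      using step.prems by (meson rtranclE)
    moreover from this have "y' = y"
      using in_degree_le_1_unique[OF fin deg] step.hyps(2) by blast
    ultimately show ?thesis
      using step.IH by blast
  qed
qed simp

lemma in_degree_le_1_root_unique:
  assumes "finite H" "\<And>v. in_degree H v \<le> 1"
    and "in_degree H r1 = 0" "in_degree H r2 = 0" "(r1, v) \<in> H\<^sup>*" "(r2, v) \<in> H\<^sup>*"
  shows "r1 = r2"
  using in_degree_le_1_ancestors_linear[OF assms(1,2,5,6)]
  by (metis in_degree_0_rtrancl_eq assms(1,3,4))

lemma cycle_reaches_ancestors:
  assumes fin: "finite H" and deg: "\<And>v. in_degree H v \<le> 1"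
    and c: "(c, c) \<in> H\<^sup>+" and x: "(x, c) \<in> H\<^sup>*"
  shows "(c, x) \<in> H\<^sup>*"
  using x
proof (induction rule: converse_rtrancl_induct)
  case (step x y)
  obtain z where "(c, z) \<in> H\<^sup>*" "(z, y) \<in> H"
  proof (cases "y = c")
    case True
    then show thesis
      using that tranclD2[OF c] by blast
  next
    case False
    then show thesis
      using that step.IH by (blast elim: rtranclE)
  qed
  moreover from this have "x = z"
    using in_degree_le_1_unique[OF fin deg] step.hyps(1) by blast
  ultimately show ?case
    by simp
qed simp

lemma directed_tree_in_degree:
  assumes tree: "directed_tree S E" and finS: "finite S"
  obtains r where "r \<in> S" "\<And>v. v \<in> S \<Longrightarrow> (r, v) \<in> E\<^sup>*" "in_degree E r = 0"
    "\<And>v. v \<in> S \<Longrightarrow> v \<noteq> r \<Longrightarrow> in_degree E v = 1"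
proof -
  obtain r where E: "E \<subseteq> S \<times> S" and r: "r \<in> S" "\<And>v. v \<in> S \<Longrightarrow> (r, v) \<in> E\<^sup>*"
    and card_E: "card E = card S - 1"
    using tree unfolding directed_tree_def by blast
  have finE: "finite E"
    using E finS by (meson finite_SigmaI finite_subset)
  have pos: "1 \<le> in_degree E v" if "v \<in> S - {r}" for v
  proof -
    have "(r, v) \<in> E\<^sup>*" "v \<noteq> r"
      using r(2) that by auto
    then obtain u where "(u, v) \<in> E"
      by (blast elim: rtranclE)
    then have "0 < in_degree E v"
      using in_degree_pos_iff[OF finE] by blast
    then show ?thesis
      by simp
  qed
  have "{a \<in> E. snd a \<in> S} = E"
    using E by auto
  then have "(\<Sum>v\<in>S. in_degree E v) = card E"
    using card_arcs_into_eq_sum_in_degree[OF finE finS] by simp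
  also have "\<dots> = (\<Sum>v\<in>S - {r}. 1)"
    using card_E finS r(1) by simp
  finally have "in_degree E r + (\<Sum>v\<in>S - {r}. in_degree E v) = (\<Sum>v\<in>S - {r}. 1)"
    using sum.remove[OF finS r(1), of "in_degree E"] by simp
  moreover have "(\<Sum>v\<in>S - {r}. 1) \<le> (\<Sum>v\<in>S - {r}. in_degree E v)"
    using pos by (rule sum_mono)
  ultimately have root: "in_degree E r = 0"
    and sums: "(\<Sum>v\<in>S - {r}. 1) = (\<Sum>v\<in>S - {r}. in_degree E v)"
    by linarith+
  have "in_degree E v = 1" if "v \<in> S" "v \<noteq> r" for v
    using sum_mono_inv[OF sums pos, of v] finS that by simp
  with r(1,2) root show thesis
    by (rule that)
qed

lemma in_degree_Int_Times:
  assumes "\<And>x. (x, u) \<in> H \<Longrightarrow> x \<in> S" and "u \<in> S"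
  shows "in_degree (H \<inter> S \<times> S) u = in_degree H u"
proof -
  have "{x. (x, u) \<in> H \<inter> S \<times> S} = {x. (x, u) \<in> H}"
    using assms by blast
  then show ?thesis
    by (simp add: in_degree_def)
qed

lemma directed_forest_root:
  assumes H: "simple_digraph n H" and forest: "directed_forest n H k" and v: "v < n"
  shows "\<exists>r. (r, v) \<in> H\<^sup>* \<and> in_degree H r = 0 \<and> in_degree H v \<le> 1"
proof -
  obtain P where P: "partition_on {0..<n} P"
    and within: "\<And>i j. (i, j) \<in> H \<Longrightarrow> \<exists>S\<in>P. i \<in> S \<and> j \<in> S"
    and trees: "\<And>S. S \<in> P \<Longrightarrow> directed_tree S (H \<inter> S \<times> S)"
    using forest unfolding directed_forest_def by fast
  have "v \<in> \<Union>P"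
    using partition_onD1[OF P] v by auto
  then obtain S where S: "S \<in> P" "v \<in> S"
    by blast
  have "S \<subseteq> {0..<n}"
    using partition_onD1[OF P] S(1) by blast
  then have finS: "finite S"
    using finite_subset by blast
  have in_S: "x \<in> S" if xu: "(x, u) \<in> H" and u: "u \<in> S" for x u
  proof -
    obtain S' where S': "S' \<in> P" "x \<in> S'" "u \<in> S'"
      using within[OF xu] by blast
    then have "S' = S"
      using disjointD[OF partition_onD2[OF P] S'(1) S(1)] u by blast
    with S' show ?thesis
      by simp
  qed
  have same: "in_degree (H \<inter> S \<times> S) u = in_degree H u" if "u \<in> S" for u
    by (rule in_degree_Int_Times) (use in_S that in blast)+
  obtain r where r: "r \<in> S" "\<And>w. w \<in> S \<Longrightarrow> (r, w) \<in> (H \<inter> S \<times> S)\<^sup>*"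
    "in_degree (H \<inter> S \<times> S) r = 0"
    and deg: "\<And>u. u \<in> S \<Longrightarrow> u \<noteq> r \<Longrightarrow> in_degree (H \<inter> S \<times> S) u = 1"
    using directed_tree_in_degree[OF trees[OF S(1)] finS] by blast
  have "(r, v) \<in> H\<^sup>*"
    using r(2)[OF S(2)] by (rule rtrancl_mono[THEN subsetD, rotated]) auto
  moreover have "in_degree H v \<le> 1"
    using deg[OF S(2)] r(3) same[OF S(2)] by (cases "v = r") auto
  ultimately show ?thesis
    using r(1,3) same by auto
qed

lemma directed_forest_imp_branching:
  assumes H: "simple_digraph n H" and forest: "directed_forest n H k"
  shows "branching H"
proof -
  have fin: "finite H"
    using H by (rule simple_digraph_finite)
  have deg: "in_degree H v \<le> 1" for v
  proof (cases "v < n")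
    case False
    then have "{u. (u, v) \<in> H} = {}"
      using H unfolding simple_digraph_def by auto
    then show ?thesis
      by (simp add: in_degree_def)
  qed (use directed_forest_root[OF H forest] in blast)
  have "acyclic H"
    unfolding acyclic_def
  proof (intro allI notI)
    fix c assume c: "(c, c) \<in> H\<^sup>+"
    then have "c < n"
      using H unfolding simple_digraph_def by (fastforce dest: tranclD)
    then obtain r where r: "(r, c) \<in> H\<^sup>*" "in_degree H r = 0"
      using directed_forest_root[OF H forest] by blast
    have "(c, r) \<in> H\<^sup>+"
      using c cycle_reaches_ancestors[OF fin deg c r(1)] by (rule trancl_rtrancl_trancl)
    then show False
      using r(2) in_degree_pos_iff[OF fin, of r] by (auto dest: tranclD2)
  qed
  with deg show ?thesis
    by (simp add: branching_def)
qed

lemma finite_acyclic_ex_root: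
  assumes "finite H" "acyclic H"
  shows "\<exists>r. in_degree H r = 0 \<and> (r, v) \<in> H\<^sup>*"
proof (induction v rule: wf_induct[OF finite_acyclic_wf[OF assms]])
  case (1 v)
  show ?case
  proof (cases "in_degree H v = 0")
    case False
    then obtain u where u: "(u, v) \<in> H"
      using in_degree_pos_iff[OF assms(1)] by blast
    then obtain r where "in_degree H r = 0" "(r, u) \<in> H\<^sup>*"
      using 1 by blast
    with u show ?thesis
      by (meson rtrancl.rtrancl_into_rtrancl)
  qed auto
qed

lemma in_degree_le_1_descendants_closed:
  assumes fin: "finite H" and deg: "\<And>v. in_degree H v \<le> 1" and r: "in_degree H r = 0"
    and uv: "(u, v) \<in> H" and rv: "(r, v) \<in> H\<^sup>*"
  shows "(r, u) \<in> H\<^sup>*"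
proof -
  have "v \<noteq> r"
    using uv r in_degree_pos_iff[OF fin, of r] by auto
  with rv obtain u' where "(r, u') \<in> H\<^sup>*" "(u', v) \<in> H"
    by (cases rule: rtranclE) auto
  then show ?thesis
    using in_degree_le_1_unique[OF fin deg uv] by blast
qed

lemma directed_tree_descendants:
  assumes fin: "finite H" and deg: "\<And>v. in_degree H v \<le> 1" and r: "in_degree H r = 0"
  defines "T \<equiv> {v. (r, v) \<in> H\<^sup>*}"
  shows "directed_tree T (H \<inter> T \<times> T)"
proof -
  let ?E = "H \<inter> T \<times> T"
  have finT: "finite T"
    using finite_rtrancl_Image[OF fin, of "{r}"] by (simp add: T_def Image_singleton)
  have closed: "u \<in> T" if "(u, v) \<in> H" "v \<in> T" for u v
    using in_degree_le_1_descendants_closed[OF fin deg r] that by (simp add: T_def)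
  have "(r, v) \<in> ?E\<^sup>*" if "(r, v) \<in> H\<^sup>*" for v
    using that
  proof (induction rule: rtrancl_induct)
    case (step y z)
    then have "(y, z) \<in> ?E"
      unfolding T_def by (auto intro: rtrancl_into_rtrancl)
    with step.IH show ?case
      by (rule rtrancl_into_rtrancl)
  qed simp
  then have reach: "\<forall>v\<in>T. (r, v) \<in> ?E\<^sup>*"
    unfolding T_def by blast
  have "{a \<in> H. snd a \<in> T} = ?E"
    using closed by auto
  then have "card ?E = (\<Sum>v\<in>T. in_degree H v)"
    using card_arcs_into_eq_sum_in_degree[OF fin finT] by simp
  also have "\<dots> = (\<Sum>v\<in>T - {r}. 1)"
  proof -
    have "in_degree H v = 1" if v: "v \<in> T - {r}" for v
    proof -
      from v have "(r, v) \<in> H\<^sup>*" "v \<noteq> r"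
        by (auto simp: T_def)
      then obtain u where "(u, v) \<in> H"
        by (cases rule: rtranclE) auto
      then show ?thesis
        using deg[of v] in_degree_pos_iff[OF fin, of v] by fastforce
    qed
    moreover have "r \<in> T"
      by (simp add: T_def)
    ultimately show ?thesis
      using finT r by (simp add: sum.remove)
  qed
  also have "\<dots> = card T - 1"
    using finT by (simp add: T_def)
  finally show ?thesis
    unfolding directed_tree_def using reach by (auto simp: T_def)
qed

lemma card_in_degree_0:
  assumes H: "simple_digraph n H" and deg: "\<And>v. in_degree H v \<le> 1"
  shows "card {r. r < n \<and> in_degree H r = 0} = n - card H"
proof -
  let ?R = "{r. r < n \<and> in_degree H r = 0}"
  have "card H = (\<Sum>v<n. in_degree H v)"
    using H by (rule card_eq_sum_in_degree)
  also have "\<dots> = (\<Sum>v\<in>{..<n} - ?R. 1)"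
  proof (rule sum.mono_neutral_cong_right)
    show "in_degree H v = 1" if "v \<in> {..<n} - ?R" for v
      using that deg[of v] by auto
  qed auto
  also have "\<dots> = card ({..<n} - ?R)"
    by simp
  also have "\<dots> = n - card ?R"
    by (subst card_Diff_subset) auto
  finally have "card H = n - card ?R" .
  moreover have "card ?R \<le> n"
    using card_mono[of "{..<n}" ?R] by fastforce
  ultimately show ?thesis
    by simp
qed

lemma branching_imp_directed_forest:
  assumes H: "simple_digraph n H" and br: "branching H"
  shows "directed_forest n H (n - card H)"
proof -
  have fin: "finite H" and acyclic: "acyclic H" and deg: "\<And>v. in_degree H v \<le> 1"
    using H br by (auto simp: branching_def simple_digraph_finite)
  have H_n: "u < n \<and> v < n" if "(u, v) \<in> H" for u v
    using H that unfolding simple_digraph_def by auto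
  define R where "R = {r. r < n \<and> in_degree H r = 0}"
  define T where "T r = {v. (r, v) \<in> H\<^sup>*}" for r
  have T_n: "T r \<subseteq> {0..<n}" if r: "r \<in> R" for r
  proof
    fix v assume "v \<in> T r"
    then have "(r, v) \<in> H\<^sup>*"
      by (simp add: T_def)
    then show "v \<in> {0..<n}"
      using r H_n by (cases rule: rtranclE) (auto simp: R_def)
  qed
  have root: "\<exists>r\<in>R. v \<in> T r" if "v < n" for v
  proof -
    obtain r where r: "in_degree H r = 0" "(r, v) \<in> H\<^sup>*"
      using finite_acyclic_ex_root[OF fin acyclic] by blast
    from r(2) have "r < n"
      using that H_n by (cases rule: converse_rtranclE) auto
    with r show ?thesis
      unfolding R_def T_def by blast
  qed
  have unique: "r1 = r2" if "r1 \<in> R" "r2 \<in> R" "v \<in> T r1" "v \<in> T r2" for r1 r2 v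
    using in_degree_le_1_root_unique[OF fin deg] that unfolding R_def T_def by blast
  have self: "r \<in> T r" for r
    by (simp add: T_def)
  have "partition_on {0..<n} (T ` R)"
  proof (rule partition_onI)
    show "\<Union>(T ` R) = {0..<n}"
      using T_n root by fastforce
    show "disjnt p q" if "p \<in> T ` R" "q \<in> T ` R" "p \<noteq> q" for p q
      using that unique unfolding disjnt_def by blast
    show "{} \<notin> T ` R"
      using self by blast
  qed
  moreover have "inj_on T R"
    using unique self by (intro inj_onI) metis
  then have "card (T ` R) = n - card H"
    using card_in_degree_0[OF H deg] by (simp add: card_image R_def)
  moreover have "\<exists>S\<in>T ` R. i \<in> S \<and> j \<in> S" if ij: "(i, j) \<in> H" for i j
  proof -
    obtain r where "r \<in> R" "(r, i) \<in> H\<^sup>*"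
      using root H_n[OF ij] unfolding T_def by blast
    with ij show ?thesis
      unfolding T_def by (auto intro: rtrancl_into_rtrancl)
  qed
  moreover have "directed_tree S (H \<inter> S \<times> S)" if "S \<in> T ` R" for S
    using that directed_tree_descendants[OF fin deg] unfolding R_def T_def by auto
  ultimately show ?thesis
    unfolding directed_forest_def by blast
qed

lemma directed_forest_iff_branching:
  assumes "simple_digraph n H"
  shows "directed_forest n H (n - card H) \<longleftrightarrow> branching H"
  using assms directed_forest_imp_branching branching_imp_directed_forest by blast

section \<open>Algebraic connectivity\<close>

lemma sorted_list_of_multiset_add_mset_nth_1_le:
  fixes a b :: "'a::linorder"
  assumes b: "b \<in># Y"
  shows "sorted_list_of_multiset (add_mset a Y) ! 1 \<le> max a b"
proof -
  obtain y ys where Y: "sorted_list_of_multiset Y = y # ys"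
    using b by (cases "sorted_list_of_multiset Y") (auto simp flip: set_sorted_list_of_multiset)
  have "y \<le> b"
    using b sorted_sorted_list_of_multiset[of Y] unfolding Y
    by (auto simp flip: set_sorted_list_of_multiset simp: Y)
  show ?thesis
  proof (cases "a \<le> y")
    case False
    have "hd (insort a ys) \<le> a"
      by (cases ys) auto
    with False show ?thesis
      by (cases ys) (auto simp: Y le_max_iff_disj)
  qed (use \<open>y \<le> b\<close> Y in simp)
qed

lemma sorted_list_of_multiset_add_mset_nth_1_eq:
  fixes a b :: "'a::linorder"
  assumes b: "b \<in># Y" and a_min: "\<And>y. y \<in># Y \<Longrightarrow> a \<le> y" and b_min: "\<And>y. y \<in># Y \<Longrightarrow> b \<le> y"
  shows "sorted_list_of_multiset (add_mset a Y) ! 1 = b"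
proof -
  obtain y ys where Y: "sorted_list_of_multiset Y = y # ys"
    using b by (cases "sorted_list_of_multiset Y") (auto simp flip: set_sorted_list_of_multiset)
  have y: "y \<in># Y"
    by (metis Y list.set_intros(1) set_sorted_list_of_multiset)
  have "y \<le> b"
    using b sorted_sorted_list_of_multiset[of Y] unfolding Y
    by (auto simp flip: set_sorted_list_of_multiset simp: Y)
  with b_min[OF y] a_min[OF y] show ?thesis
    by (simp add: Y)
qed

lemma alg_conn_less_if_complement_root:
  assumes A: "simple_digraph n A" and n: "2 \<le> n"
    and e: "poly (char_poly (laplacian n (complement n A))) e = 0" "1 < Re e"
  shows "alg_conn n A < real n - 1"
proof -
  obtain Q where Q: "proots (char_poly (laplacian n (complement n A))) = add_mset 0 Q"
    "proots (char_poly (laplacian n A)) = add_mset 0 (image_mset (\<lambda>x. of_nat n - x) Q)"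
    using proots_laplacian_complement[OF A] n by auto
  have "e \<in># proots (char_poly (laplacian n (complement n A)))"
    using e(1) by (simp add: in_proots_char_poly_iff[OF laplacian_dims(1)])
  then have "e \<in># add_mset 0 Q"
    using Q(1) by simp
  moreover have "e \<noteq> 0"
    using e(2) by auto
  ultimately have "e \<in># Q"
    by simp
  then have "Re (of_nat n - e) \<in># image_mset Re (image_mset (\<lambda>x. of_nat n - x) Q)"
    using imageI[of e "set_mset Q" "\<lambda>x. Re (of_nat n - x)"] by (simp add: image_image)
  then have "alg_conn n A \<le> max (Re 0) (Re (of_nat n - e))"
    unfolding alg_conn_def Q(2) image_mset_add_mset by (rule sorted_list_of_multiset_add_mset_nth_1_le)
  also have "\<dots> < real n - 1"
    using e(2) n by simp
  finally show ?thesis .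
qed

lemma proots_laplacian_branching:
  assumes H: "simple_digraph n H" and br: "branching H"
  shows "set_mset (proots (char_poly (laplacian n H))) \<subseteq> {0, 1}"
    and "H \<noteq> {} \<Longrightarrow> 1 \<in># proots (char_poly (laplacian n H))"
proof -
  have roots: "set_mset (proots (char_poly (laplacian n H))) = (\<lambda>v. of_nat (in_degree H v)) ` {0..<n}"
    using br by (simp add: proots_laplacian_acyclic[OF H] branching_def)
  have deg: "in_degree H v \<le> 1" for v
    using br by (simp add: branching_def)
  have "of_nat (in_degree H v) \<in> {0, 1 :: complex}" for v
    using deg[of v] by (cases "in_degree H v") auto
  then show "set_mset (proots (char_poly (laplacian n H))) \<subseteq> {0, 1}"
    unfolding roots by blast
  assume "H \<noteq> {}"
  then obtain u v where uv: "(u, v) \<in> H"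
    by auto
  then have "0 < in_degree H v" "v < n"
    using in_degree_pos_iff[OF simple_digraph_finite[OF H], of v] H by (auto simp: simple_digraph_def)
  then have "in_degree H v = 1" "v < n"
    using deg[of v] by auto
  then show "1 \<in># proots (char_poly (laplacian n H))"
    unfolding roots by (auto simp: image_iff intro!: bexI[of _ v])
qed

lemma alg_conn_eq_if_complement_branching:
  assumes A: "simple_digraph n A" and n: "2 \<le> n"
    and br: "branching (complement n A)" and nonempty: "complement n A \<noteq> {}"
  shows "alg_conn n A = real n - 1"
proof -
  let ?H = "complement n A"
  obtain Q where Q: "proots (char_poly (laplacian n ?H)) = add_mset 0 Q"
    "proots (char_poly (laplacian n A)) = add_mset 0 (image_mset (\<lambda>x. of_nat n - x) Q)"
    using proots_laplacian_complement[OF A] n by auto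
  have Q01: "x = 0 \<or> x = 1" if "x \<in># Q" for x
    using that proots_laplacian_branching(1)[OF simple_digraph_complement br] Q(1) by auto
  have "1 \<in># Q"
    using proots_laplacian_branching(2)[OF simple_digraph_complement br nonempty] Q(1) by simp
  let ?Y = "image_mset Re (image_mset (\<lambda>x. of_nat n - x) Q)"
  have one: "real n - 1 \<in># ?Y"
    using \<open>1 \<in># Q\<close> imageI[of 1 "set_mset Q" "\<lambda>x. Re (of_nat n - x)"] by (simp add: image_image)
  have bounds: "real n - 1 \<le> y" if y: "y \<in># ?Y" for y
  proof -
    obtain x where x: "x \<in># Q" and y_eq: "y = Re (of_nat n - x)"
      using y by auto
    show ?thesis
      using Q01[OF x] y_eq by auto
  qed
  show ?thesis
    unfolding alg_conn_def Q(2) image_mset_add_mset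
  proof (rule sorted_list_of_multiset_add_mset_nth_1_eq[OF one])
    fix y assume "y \<in># ?Y"
    then have "real n - 1 \<le> y"
      by (rule bounds)
    moreover have "2 \<le> real n"
      using n by simp
    ultimately show "Re 0 \<le> y"
      by simp
  qed (rule bounds)
qed

lemma alg_conn_less_if_complement_not_branching:
  assumes A: "simple_digraph n A" and n: "2 \<le> n" and not_br: "\<not> branching (complement n A)"
  shows "alg_conn n A < real n - 1"
proof -
  let ?H = "complement n A"
  have H: "simple_digraph n ?H"
    by (rule simple_digraph_complement)
  have "\<exists>e. poly (char_poly (laplacian n ?H)) e = 0 \<and> 1 < Re e"
  proof (cases "acyclic ?H")
    case False
    then obtain v where "(v, v) \<in> ?H\<^sup>+"
      unfolding acyclic_def by blast
    then show ?thesis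
      by (rule laplacian_root_Re_gt_1_if_cycle[OF H])
  next
    case True
    with not_br obtain v where v: "1 < in_degree ?H v"
      by (auto simp: branching_def not_le)
    then have "0 < in_degree ?H v"
      by simp
    then obtain u where "(u, v) \<in> ?H"
      using in_degree_pos_iff[OF simple_digraph_finite[OF H]] by blast
    then have "v < n"
      by (simp add: complement_def)
    then have "of_nat (in_degree ?H v) \<in># proots (char_poly (laplacian n ?H))"
      by (simp add: proots_laplacian_acyclic[OF H True])
    then have "poly (char_poly (laplacian n ?H)) (of_nat (in_degree ?H v)) = 0"
      using in_proots_char_poly_iff[OF laplacian_dims(1)] by blast
    moreover have "1 < Re (of_nat (in_degree ?H v))"
      using v by simp
    ultimately show ?thesis
      by blast
  qed
  then show ?thesis
    using alg_conn_less_if_complement_root[OF A n] by blast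
qed

lemma branching_star: "branching ((\<lambda>i. (0, i)) ` {1..h})"
proof -
  let ?F = "(\<lambda>i. (0::nat, i)) ` {1..h}"
  have "in_degree ?F v \<le> 1" for v
  proof -
    have "{u. (u, v) \<in> ?F} \<subseteq> {0}"
      by auto
    then show ?thesis
      using card_mono[of "{0}" "{u. (u, v) \<in> ?F}"] by (simp add: in_degree_def)
  qed
  moreover have "acyclic ?F"
    unfolding acyclic_def
  proof (intro allI notI)
    fix v assume v: "(v, v) \<in> ?F\<^sup>+"
    obtain w where "(v, w) \<in> ?F"
      using tranclD[OF v] by blast
    moreover obtain u where "(u, v) \<in> ?F"
      using tranclD2[OF v] by blast
    ultimately show False
      by auto
  qed
  ultimately show ?thesis
    by (simp add: branching_def)
qed

lemma alg_conn_complement_branching: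
  assumes A: "simple_digraph n A" and n: "2 \<le> n" and nonempty: "complement n A \<noteq> {}"
  shows "alg_conn n A \<le> real n - 1"
    and "alg_conn n A = real n - 1 \<longleftrightarrow> branching (complement n A)"
  using alg_conn_eq_if_complement_branching[OF A n _ nonempty]
    alg_conn_less_if_complement_not_branching[OF A n] by force+

lemma alg_conn_complement_star:
  assumes n: "2 \<le> n" and h: "1 \<le> h" "h < n"
  shows "\<exists>A. simple_digraph n A \<and> card A = n * (n - 1) - h \<and> alg_conn n A = real n - 1"
proof -
  let ?F = "(\<lambda>i. (0::nat, i)) ` {1..h}"
  have F: "simple_digraph n ?F" "card ?F = h" "?F \<noteq> {}"
    using h by (auto simp: simple_digraph_def card_image inj_on_def)
  let ?A = "complement n ?F"
  have A: "simple_digraph n ?A" and "complement n ?A = ?F"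
    using F(1) by (simp_all add: simple_digraph_complement complement_complement)
  then have "alg_conn n ?A = real n - 1"
    using alg_conn_eq_if_complement_branching[OF A n] branching_star F(3) by simp
  moreover have "card ?A = n * (n - 1) - h"
    using card_complement[OF F(1)] F(2) by simp
  ultimately show ?thesis
    using A by blast
qed

lemma complement_arc_count_bounds:
  fixes n m :: nat
  assumes "2 \<le> n" and "(n - 1)^2 \<le> m" and "m < n * (n - 1)"
  shows "1 \<le> n * (n - 1) - m" "n * (n - 1) - m < n" "m - n * (n - 2) = n - (n * (n - 1) - m)"
proof -
  obtain k where n_eq: "n = k + 2"
    using le_Suc_ex[OF assms(1)] by (auto simp: add.commute)
  have "n * (n - 1) = k * k + 3 * k + 2" "(n - 1)^2 = k * k + 2 * k + 1" "n * (n - 2) = k * k + 2 * k"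
    unfolding n_eq by (simp_all add: power2_eq_square algebra_simps)
  then show "1 \<le> n * (n - 1) - m" "n * (n - 1) - m < n" "m - n * (n - 2) = n - (n * (n - 1) - m)"
    using assms(2,3) n_eq by linarith+
qed

theorem theorem2:
  fixes n m :: nat
  assumes "n \<ge> 2" and "(n - 1)^2 \<le> m" and "m < n * (n - 1)"
  shows "(\<forall>A. simple_digraph n A \<and> card A = m \<longrightarrow> alg_conn n A \<le> real n - 1)
       \<and> (\<exists>A. simple_digraph n A \<and> card A = m \<and> alg_conn n A = real n - 1)
       \<and> (\<forall>A. simple_digraph n A \<and> card A = m \<longrightarrow>
            (alg_conn n A = real n - 1 \<longleftrightarrow>
             directed_forest n (complement n A) (m - n * (n - 2))))"
proof (intro conjI allI impI)
  define h where "h = n * (n - 1) - m"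
  note h = complement_arc_count_bounds[OF assms, folded h_def]
  have complement: "card (complement n A) = h" "complement n A \<noteq> {}"
    if "simple_digraph n A \<and> card A = m" for A
    using card_complement[of n A] that h(1) unfolding h_def by auto
  show "alg_conn n A \<le> real n - 1" if "simple_digraph n A \<and> card A = m" for A
    using alg_conn_complement_branching(1)[OF _ assms(1) complement(2)] that by blast
  show "\<exists>A. simple_digraph n A \<and> card A = m \<and> alg_conn n A = real n - 1"
    using alg_conn_complement_star[OF assms(1) h(1,2)] assms(3) by (simp add: h_def)
  show "alg_conn n A = real n - 1 \<longleftrightarrow> directed_forest n (complement n A) (m - n * (n - 2))"
    if A: "simple_digraph n A \<and> card A = m" for A
    using alg_conn_complement_branching(2)[OF _ assms(1) complement(2)[OF A]]
      directed_forest_iff_branching[OF simple_digraph_complement, of n A] complement(1)[OF A] A h(3)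
    by simp
qed

end
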